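(* If $X$ is a crowded (Hausdorff) $\sigma$-space, then $dis(X)=dis^*(X)$.
   Context: All spaces are Hausdorff. A space is crowded if it has no isolated points. A network for $X$ is a family $\mathcal{N}$ of subsets of $X$ such that for every open $U\subseteq X$ and $x\in U$ there is $N\in\mathcal{N}$ with $x\in N\subseteq U$. A $\sigma$-space is a space having a $\sigma$-discrete network. $dis(X)$ is the least number of discrete subspaces needed to cover $X$, and $dis^*(X)$ is the least number of closed discrete subsets needed to cover $X$. *)

theory Defs
  imports "HOL-Analysis.Analysis"
begin

definition crowded :: "'a topology \<Rightarrow> bool" where
  "crowded X \<longleftrightarrow> (\<forall>x\<in>topspace X. \<not> openin X {x})"

definition discrete_subspace :: "'a topology \<Rightarrow> 'a set \<Rightarrow> bool" where
  "discrete_subspace X D \<longleftrightarrow> D \<subseteq> topspace X \<and> subtopology X D = discrete_topology D"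

definition network :: "'a topology \<Rightarrow> 'a set set \<Rightarrow> bool" where
  "network X \<N> \<longleftrightarrow> (\<forall>N\<in>\<N>. N \<subseteq> topspace X) \<and>
     (\<forall>U x. openin X U \<and> x \<in> U \<longrightarrow> (\<exists>N\<in>\<N>. x \<in> N \<and> N \<subseteq> U))"

definition discrete_family :: "'a topology \<Rightarrow> 'a set set \<Rightarrow> bool" where
  "discrete_family X \<A> \<longleftrightarrow> (\<forall>x\<in>topspace X. \<exists>U. openin X U \<and> x \<in> U \<and>
     (\<forall>A\<in>\<A>. \<forall>B\<in>\<A>. A \<inter> U \<noteq> {} \<and> B \<inter> U \<noteq> {} \<longrightarrow> A = B))"

definition sigma_discrete :: "'a topology \<Rightarrow> 'a set set \<Rightarrow> bool" where
  "sigma_discrete X \<N> \<longleftrightarrow> (\<exists>F :: nat \<Rightarrow> 'a set set. \<N> = (\<Union>n. F n) \<and> (\<forall>n. discrete_family X (F n)))"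

definition sigma_space :: "'a topology \<Rightarrow> bool" where
  "sigma_space X \<longleftrightarrow> (\<exists>\<N>. network X \<N> \<and> sigma_discrete X \<N>)"

definition dis_cover :: "'a topology \<Rightarrow> 'a set set \<Rightarrow> bool" where
  "dis_cover X \<F> \<longleftrightarrow> (\<forall>D\<in>\<F>. discrete_subspace X D) \<and> \<Union>\<F> = topspace X"

definition dis_star_cover :: "'a topology \<Rightarrow> 'a set set \<Rightarrow> bool" where
  "dis_star_cover X \<F> \<longleftrightarrow> (\<forall>D\<in>\<F>. closedin X D \<and> discrete_subspace X D) \<and> \<Union>\<F> = topspace X"

(* dis(X), dis*(X): the cardinality of a cover of minimal cardinality
   (represented as the cardinal order relation card_of of such a cover) *)
definition dis :: "'a topology \<Rightarrow> 'a set rel" where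
  "dis X = card_of (SOME \<F>. dis_cover X \<F> \<and>
      (\<forall>\<G>. dis_cover X \<G> \<longrightarrow> (card_of \<F>, card_of \<G>) \<in> ordLeq))"

definition dis_star :: "'a topology \<Rightarrow> 'a set rel" where
  "dis_star X = card_of (SOME \<F>. dis_star_cover X \<F> \<and>
      (\<forall>\<G>. dis_star_cover X \<G> \<longrightarrow> (card_of \<F>, card_of \<G>) \<in> ordLeq))"

end

theory Submission
  imports Defs
begin

(*
  Every closed discrete cover is a discrete cover, so dis(X) <= dis*(X).
  Conversely, let A be any cover of X by discrete subspaces and let N = U_n F_n be a
  network with every F_n a discrete family.  For D in A, the points d of D that are
  isolated in D by some member of F_n (i.e. M \<inter> D = {d} for some M in F_n) form a
  set whose points are separated from each other by a single neighbourhood of each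
  point of X; in a T1 space such a "locally sparse" set is closed and discrete.  Since
  D is discrete and N is a network, these sets cover D as n ranges over the naturals.
  This yields a closed discrete cover of cardinality at most |A \<times> nat|, which equals
  |A| because A is infinite: a crowded T1 space that is nonempty cannot be covered by
  finitely many discrete subspaces.
*)

notation card_of (\<open>|_|\<close>)

text \<open>Cardinals are well-ordered, so any nonempty class of sets has a member of minimal
  cardinality; this is what makes the Hilbert-choice definitions of dis and dis* meaningful.\<close>

lemma min_card_exists:
  fixes P :: "'b set \<Rightarrow> bool"
  assumes "P G0"
  shows "\<exists>F. P F \<and> (\<forall>G. P G \<longrightarrow> ( |F|, |G| ) \<in> ordLeq)"
proof -
  let ?cards = "{|G| | G. P G}"
  have "|G0| \<in> ?cards" using assms by blast
  from wfE_min[OF wf_ordLess this]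
  obtain R where "R \<in> ?cards" and minimal: "\<And>S. (S, R) \<in> ordLess \<Longrightarrow> S \<notin> ?cards"
    by blast
  then obtain F where F: "P F" "R = |F|" by blast
  have "( |F|, |G| ) \<in> ordLeq" if "P G" for G
  proof -
    have "( |G|, |F| ) \<notin> ordLess" using minimal F(2) that by blast
    then show ?thesis using not_ordLess_iff_ordLeq card_of_Well_order by blast
  qed
  with F(1) show ?thesis by blast
qed

lemma min_card_ordIso:
  fixes P Q :: "'b set \<Rightarrow> bool"
  assumes "Q G0"
    and Q_imp_P: "\<And>G. Q G \<Longrightarrow> P G"
    and refine: "\<And>F. P F \<Longrightarrow> \<exists>G. Q G \<and> ( |G|, |F| ) \<in> ordLeq"
  shows "( |SOME F. P F \<and> (\<forall>G. P G \<longrightarrow> ( |F|, |G| ) \<in> ordLeq)|,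
           |SOME F. Q F \<and> (\<forall>G. Q G \<longrightarrow> ( |F|, |G| ) \<in> ordLeq)| ) \<in> ordIso"
    (is "( |?A|, |?B| ) \<in> ordIso")
proof -
  have B: "Q ?B \<and> (\<forall>G. Q G \<longrightarrow> ( |?B|, |G| ) \<in> ordLeq)"
    by (rule someI_ex[OF min_card_exists[of Q, OF assms(1)]])
  have A: "P ?A \<and> (\<forall>G. P G \<longrightarrow> ( |?A|, |G| ) \<in> ordLeq)"
    by (rule someI_ex[OF min_card_exists[of P, OF Q_imp_P[OF assms(1)]]])
  have "( |?A|, |?B| ) \<in> ordLeq" using A Q_imp_P B by blast
  moreover obtain G where "Q G" "( |G|, |?A| ) \<in> ordLeq" using refine A by blast
  then have "( |?B|, |?A| ) \<in> ordLeq" using B ordLeq_transitive by blast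
  ultimately show ?thesis using ordIso_iff_ordLeq by blast
qed

lemma discrete_subspace_iff:
  "discrete_subspace X D \<longleftrightarrow> D \<subseteq> topspace X \<and> (\<forall>d\<in>D. \<exists>U. openin X U \<and> U \<inter> D = {d})"
proof -
  have "subtopology X D = discrete_topology D \<longleftrightarrow>
        topspace (subtopology X D) = D \<and> (\<forall>x\<in>D. openin (subtopology X D) {x})"
    by (subst eq_commute) (rule discrete_topology_unique)
  moreover have "openin (subtopology X D) {x} \<longleftrightarrow> (\<exists>U. openin X U \<and> U \<inter> D = {x})" for x
    unfolding openin_subtopology by (auto simp: eq_commute)
  ultimately show ?thesis unfolding discrete_subspace_def by auto
qed

definition locally_sparse :: "'a topology \<Rightarrow> 'a set \<Rightarrow> bool" where
  "locally_sparse X S \<longleftrightarrow> S \<subseteq> topspace X \<and>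
     (\<forall>x\<in>topspace X. \<exists>U. openin X U \<and> x \<in> U \<and> (\<forall>d\<in>S. \<forall>e\<in>S. d \<in> U \<and> e \<in> U \<longrightarrow> d = e))"

lemma locally_sparse_imp_discrete:
  assumes "locally_sparse X S"
  shows "discrete_subspace X S"
  unfolding discrete_subspace_iff
proof (intro conjI ballI)
  show "S \<subseteq> topspace X" using assms unfolding locally_sparse_def by blast
  fix d assume d: "d \<in> S"
  then obtain U where "openin X U" "d \<in> U" "\<forall>a\<in>S. \<forall>e\<in>S. a \<in> U \<and> e \<in> U \<longrightarrow> a = e"
    using assms unfolding locally_sparse_def by blast
  then have "openin X U \<and> U \<inter> S = {d}" using d by blast
  then show "\<exists>U. openin X U \<and> U \<inter> S = {d}" by blast
qed

text \<open>In a T1 space a locally sparse set is closed: a neighbourhood of an outside point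
  meets it in at most one point, which can be removed since points are closed.\<close>

lemma locally_sparse_imp_closed:
  assumes t1: "t1_space X" and sparse: "locally_sparse X S"
  shows "closedin X S"
proof -
  have S_sub: "S \<subseteq> topspace X" using sparse unfolding locally_sparse_def by blast
  have "\<exists>T. openin X T \<and> x \<in> T \<and> T \<subseteq> topspace X - S" if x: "x \<in> topspace X - S" for x
  proof -
    obtain U where U: "openin X U" "x \<in> U" "\<forall>d\<in>S. \<forall>e\<in>S. d \<in> U \<and> e \<in> U \<longrightarrow> d = e"
      using sparse x unfolding locally_sparse_def by blast
    have U_sub: "U \<subseteq> topspace X" using openin_subset[OF U(1)] .
    show ?thesis
    proof (cases "U \<inter> S = {}")
      case True
      then show ?thesis using U(1,2) U_sub by blast
    next
      case False
      then obtain e where e: "e \<in> U" "e \<in> S" by blast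
      have "openin X (U - {e})"
        using U(1) closedin_t1_singleton[OF t1] e(2) S_sub by (meson openin_diff subsetD)
      moreover have "U - {e} \<subseteq> topspace X - S" using U(3) e U_sub by blast
      ultimately show ?thesis using x e(2) U(2) by blast
    qed
  qed
  then have "openin X (topspace X - S)" by (subst openin_subopen) blast
  then show ?thesis using S_sub unfolding closedin_def by blast
qed

text \<open>In a crowded T1 space no nonempty open set is covered by finitely many discrete
  subspaces: each discrete piece meeting U can be avoided on a smaller nonempty open set.\<close>

lemma open_not_finite_union_discrete:
  assumes t1: "t1_space X" and crowded: "crowded X" and fin: "finite A"
  shows "\<forall>D\<in>A. discrete_subspace X D \<Longrightarrow> openin X U \<Longrightarrow> U \<noteq> {} \<Longrightarrow> \<not> U \<subseteq> \<Union>A"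
  using fin
proof (induction A arbitrary: U rule: finite_induct)
  case empty
  then show ?case by auto
next
  case (insert D A)
  have discrete_A: "\<forall>D\<in>A. discrete_subspace X D" and discrete_D: "discrete_subspace X D"
    using insert.prems(1) by auto
  show ?case
  proof
    assume cover: "U \<subseteq> \<Union>(insert D A)"
    show False
    proof (cases "U \<inter> D = {}")
      case True
      then have "U \<subseteq> \<Union>A" using cover by blast
      then show False using insert.IH[OF discrete_A insert.prems(2,3)] by blast
    next
      case False
      then obtain d where d: "d \<in> U" "d \<in> D" by blast
      obtain V where V: "openin X V" "V \<inter> D = {d}"
        using discrete_D d unfolding discrete_subspace_iff by blast
      have d_in: "d \<in> topspace X" using d(1) openin_subset[OF insert.prems(2)] by blast
      have open_UV: "openin X (U \<inter> V)" using insert.prems(2) V(1) by blast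
      have "\<not> openin X {d}" using crowded d_in unfolding crowded_def by blast
      then have "U \<inter> V \<noteq> {d}" using open_UV by metis
      then have nonempty: "U \<inter> V - {d} \<noteq> {}" using d V(2) by blast
      have "openin X (U \<inter> V - {d})"
        using open_UV closedin_t1_singleton[OF t1 d_in] by (rule openin_diff)
      then have "\<not> U \<inter> V - {d} \<subseteq> \<Union>A" using insert.IH[OF discrete_A _ nonempty] by blast
      then show False using cover V(2) by blast
    qed
  qed
qed

corollary dis_cover_infinite:
  assumes "t1_space X" "crowded X" "topspace X \<noteq> {}" "dis_cover X A"
  shows "infinite A"
  using open_not_finite_union_discrete[OF assms(1,2), of A "topspace X"] assms(3,4)
  unfolding dis_cover_def by blast

definition isolating_trace :: "'a set set \<Rightarrow> 'a set \<Rightarrow> 'a set" where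
  "isolating_trace F D = {d \<in> D. \<exists>M\<in>F. d \<in> M \<and> M \<inter> D = {d}}"

lemma isolating_trace_UN: "isolating_trace (\<Union>n. F n) D = (\<Union>n. isolating_trace (F n) D)"
  unfolding isolating_trace_def by blast

text \<open>Distinct points of the trace are isolated by distinct members of F, so a
  neighbourhood meeting only one member of a discrete family contains at most one of them.\<close>

lemma isolating_trace_discrete_family:
  assumes "discrete_family X F" and "D \<subseteq> topspace X"
  shows "locally_sparse X (isolating_trace F D)"
  unfolding locally_sparse_def
proof (intro conjI ballI)
  show "isolating_trace F D \<subseteq> topspace X"
    using assms(2) unfolding isolating_trace_def by blast
  fix x assume "x \<in> topspace X"
  then obtain U where U: "openin X U" "x \<in> U"
    and meets_one: "\<And>P Q. P \<in> F \<Longrightarrow> Q \<in> F \<Longrightarrow> P \<inter> U \<noteq> {} \<Longrightarrow> Q \<inter> U \<noteq> {} \<Longrightarrow> P = Q"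
    using assms(1) unfolding discrete_family_def by meson
  have "d = e" if d: "d \<in> isolating_trace F D" "d \<in> U" and e: "e \<in> isolating_trace F D" "e \<in> U"
    for d e
  proof -
    obtain P where P: "P \<in> F" "d \<in> P" "P \<inter> D = {d}"
      using d(1) unfolding isolating_trace_def by blast
    obtain Q where Q: "Q \<in> F" "e \<in> Q" "Q \<inter> D = {e}"
      using e(1) unfolding isolating_trace_def by blast
    have "P = Q" using meets_one[OF P(1) Q(1)] P(2) Q(2) d(2) e(2) by blast
    with P(3) Q(3) show "d = e" by simp
  qed
  with U show "\<exists>U. openin X U \<and> x \<in> U \<and> (\<forall>d\<in>isolating_trace F D. \<forall>e\<in>isolating_trace F D.
      d \<in> U \<and> e \<in> U \<longrightarrow> d = e)" by blast
qed

text \<open>A network refines the open sets isolating points of a discrete subspace, so every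
  point of a discrete subspace lies in the isolating trace of a network.\<close>

lemma isolating_trace_network:
  assumes "network X N" and "discrete_subspace X D"
  shows "isolating_trace N D = D"
proof -
  have "d \<in> isolating_trace N D" if d: "d \<in> D" for d
  proof -
    obtain U where U: "openin X U" "U \<inter> D = {d}"
      using assms(2) d unfolding discrete_subspace_iff by blast
    have "d \<in> U" using U(2) by blast
    then obtain M where M: "M \<in> N" "d \<in> M" "M \<subseteq> U"
      using assms(1) U(1) unfolding network_def by meson
    have "M \<inter> D = {d}" using M(2,3) U(2) d by blast
    then show ?thesis using M(1,2) d unfolding isolating_trace_def by blast
  qed
  then show ?thesis unfolding isolating_trace_def by auto
qed

lemma dis_star_cover_imp_dis_cover: "dis_star_cover X G \<Longrightarrow> dis_cover X G"
  unfolding dis_star_cover_def dis_cover_def by blast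

lemma singletons_dis_star_cover:
  assumes "t1_space X"
  shows "dis_star_cover X ((\<lambda>x. {x}) ` topspace X)"
proof -
  have "closedin X {x} \<and> discrete_subspace X {x}" if x: "x \<in> topspace X" for x
    using closedin_t1_singleton[OF assms x] x openin_topspace[of X]
    unfolding discrete_subspace_iff by blast
  then show ?thesis unfolding dis_star_cover_def by blast
qed

text \<open>In a T1 sigma-space, a cover A by discrete subspaces yields a closed discrete cover of
  cardinality at most |A \<times> nat|: the isolating traces of each D in A with respect to the
  discrete families composing a sigma-discrete network.\<close>

lemma closed_discrete_cover_Times_nat:
  assumes t1: "t1_space X" and "sigma_space X" and A: "dis_cover X A"
  shows "\<exists>C. dis_star_cover X C \<and> ( |C|, |A \<times> (UNIV :: nat set)| ) \<in> ordLeq"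
proof -
  obtain F :: "nat \<Rightarrow> 'a set set" where
    network: "network X (\<Union>n. F n)" and discrete: "\<And>n. discrete_family X (F n)"
    using assms(2) unfolding sigma_space_def sigma_discrete_def by blast
  define C where "C = (\<lambda>(D, n). isolating_trace (F n) D) ` (A \<times> UNIV)"
  have A_discrete: "discrete_subspace X D" if "D \<in> A" for D
    using A that unfolding dis_cover_def by blast
  have pieces: "closedin X E \<and> discrete_subspace X E" if E: "E \<in> C" for E
  proof -
    obtain D n where D: "D \<in> A" and E_eq: "E = isolating_trace (F n) D"
      using E unfolding C_def by fastforce
    have "D \<subseteq> topspace X" using A_discrete[OF D] unfolding discrete_subspace_def by blast
    then have "locally_sparse X E"
      unfolding E_eq by (rule isolating_trace_discrete_family[OF discrete])
    then show ?thesis using locally_sparse_imp_closed[OF t1] locally_sparse_imp_discrete by blast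
  qed
  have "\<Union>C = (\<Union>D\<in>A. \<Union>n. isolating_trace (F n) D)" unfolding C_def by auto
  also have "\<dots> = \<Union>A"
    using isolating_trace_network[OF network A_discrete] by (simp add: isolating_trace_UN)
  finally have "dis_star_cover X C"
    using pieces A unfolding dis_star_cover_def dis_cover_def by simp
  moreover have "( |C|, |A \<times> (UNIV :: nat set)| ) \<in> ordLeq"
    unfolding C_def by (rule card_of_image)
  ultimately show ?thesis by blast
qed

text \<open>In a crowded T1 sigma-space every discrete cover can be replaced by a closed discrete
  cover of no larger cardinality; A is infinite, so |A \<times> nat| = |A|.\<close>

lemma closed_discrete_refinement:
  assumes t1: "t1_space X" and "crowded X" and "sigma_space X" and A: "dis_cover X A"
  shows "\<exists>C. dis_star_cover X C \<and> ( |C|, |A| ) \<in> ordLeq"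
proof (cases "topspace X = {}")
  case True
  then have "dis_star_cover X {}" unfolding dis_star_cover_def by simp
  then show ?thesis using card_of_empty by blast
next
  case False
  then have infinite: "infinite A" by (rule dis_cover_infinite[OF t1 assms(2) _ A])
  have "( |A \<times> (UNIV :: nat set)|, |A| ) \<in> ordIso"
    using card_of_Times_infinite_simps(1)[OF infinite UNIV_not_empty]
      infinite_iff_card_of_nat[THEN iffD1, OF infinite] .
  moreover obtain C where "dis_star_cover X C" "( |C|, |A \<times> (UNIV :: nat set)| ) \<in> ordLeq"
    using closed_discrete_cover_Times_nat[OF t1 assms(3) A] by blast
  ultimately show ?thesis using ordLeq_ordIso_trans by blast
qed

theorem mainTheorem4:
  fixes X :: "'a topology"
  assumes "Hausdorff_space X" and "crowded X" and "sigma_space X"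
  shows "(dis X, dis_star X) \<in> ordIso"
proof -
  have t1: "t1_space X" using assms(1) Hausdorff_imp_t1_space by blast
  show ?thesis
    unfolding dis_def dis_star_def
  proof (rule min_card_ordIso)
    show "dis_star_cover X ((\<lambda>x. {x}) ` topspace X)" using singletons_dis_star_cover[OF t1] .
    show "\<And>G. dis_star_cover X G \<Longrightarrow> dis_cover X G" by (rule dis_star_cover_imp_dis_cover)
    show "\<And>F. dis_cover X F \<Longrightarrow> \<exists>G. dis_star_cover X G \<and> ( |G|, |F| ) \<in> ordLeq"
      using closed_discrete_refinement[OF t1 assms(2,3)] by blast
  qed
qed

end
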